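(* Let $X\subset\mathbb{R}$, let $\delta>0$ and let $f,g\in C_u(X)$ with $g>0$ and $\|g\|_\infty\le\delta$. Then $N_\delta(\mathrm{graph}(f+g))\ge\frac12 N_\delta(\mathrm{graph}(f))$.
   Context: $C_u(X)$ is the set of uniformly continuous real functions on $X$, $\|\cdot\|_\infty$ is the sup norm on $X$, and $\mathrm{graph}(h)=\{(x,h(x)):x\in X\}$. For $F\subset\mathbb{R}^2$, $N_\delta(F)$ is the number of boxes $B_i^j=[i\delta,(i+1)\delta)\times[j\delta,(j+1)\delta)$ ($i,j\in\mathbb{Z}$) of the disjoint $\delta$-mesh that intersect $F$. *)

theory Defs
  imports "HOL-Analysis.Analysis" "HOL-Library.Extended_Nat"
begin

definition mesh_box :: "real \<Rightarrow> int \<Rightarrow> int \<Rightarrow> (real \<times> real) set" where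
  "mesh_box \<delta> i j = {(x, y). of_int i * \<delta> \<le> x \<and> x < (of_int i + 1) * \<delta> \<and>
                              of_int j * \<delta> \<le> y \<and> y < (of_int j + 1) * \<delta>}"

definition N_delta :: "real \<Rightarrow> (real \<times> real) set \<Rightarrow> enat" where
  "N_delta \<delta> F =
     (let S = {p :: int \<times> int. mesh_box \<delta> (fst p) (snd p) \<inter> F \<noteq> {}}
      in if finite S then enat (card S) else \<infinity>)"

definition graph_on :: "real set \<Rightarrow> (real \<Rightarrow> real) \<Rightarrow> (real \<times> real) set" where
  "graph_on X h = {(x, h x) | x. x \<in> X}"

end

theory Submission
  imports Defs
begin

text \<open>Raising a point by at most \<delta> moves it into its own mesh box or the one directly above,
  so every box met by the graph of f is met by the graph of f + g or lies just below such a box.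
  Hence the count at most doubles.\<close>

definition mesh_cells :: "real \<Rightarrow> (real \<times> real) set \<Rightarrow> (int \<times> int) set" where
  "mesh_cells \<delta> F = {p. mesh_box \<delta> (fst p) (snd p) \<inter> F \<noteq> {}}"

definition ecard :: "'a set \<Rightarrow> enat" where
  "ecard A = (if finite A then enat (card A) else \<infinity>)"

lemma N_delta_eq_ecard: "N_delta \<delta> F = ecard (mesh_cells \<delta> F)"
  unfolding N_delta_def ecard_def mesh_cells_def Let_def by simp

lemma ecard_le_double_if_subset_Un_image:
  assumes "S \<subseteq> T \<union> h ` T"
  shows "ecard S \<le> 2 * ecard T"
proof (cases "finite T")
  case False
  then show ?thesis by (simp add: ecard_def numeral_eq_enat)
next
  case True
  then have "finite S" using assms finite_subset by blast
  have "card S \<le> card (T \<union> h ` T)"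
    using assms True by (intro card_mono) auto
  also have "\<dots> \<le> card T + card (h ` T)" by (rule card_Un_le)
  also have "\<dots> \<le> 2 * card T" using card_image_le[OF True] by simp
  finally show ?thesis using True \<open>finite S\<close> by (simp add: ecard_def numeral_eq_enat)
qed

lemma mesh_box_lift:
  assumes "(x, y) \<in> mesh_box \<delta> i j" and "0 \<le> t" and "t \<le> \<delta>"
  shows "(x, y + t) \<in> mesh_box \<delta> i j \<or> (x, y + t) \<in> mesh_box \<delta> i (j + 1)"
  using assms unfolding mesh_box_def by (auto simp: algebra_simps)

lemma mesh_cells_graph_lift:
  assumes "\<forall>x\<in>X. 0 \<le> g x \<and> g x \<le> \<delta>"
  shows "mesh_cells \<delta> (graph_on X f)
    \<subseteq> mesh_cells \<delta> (graph_on X (\<lambda>x. f x + g x))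
      \<union> (\<lambda>(i, j). (i, j - 1)) ` mesh_cells \<delta> (graph_on X (\<lambda>x. f x + g x))"
    (is "_ \<subseteq> ?T \<union> ?down ` ?T")
proof
  fix p assume "p \<in> mesh_cells \<delta> (graph_on X f)"
  then obtain i j x where p: "p = (i, j)" and "x \<in> X" and box: "(x, f x) \<in> mesh_box \<delta> i j"
    unfolding mesh_cells_def graph_on_def by (cases p) auto
  have graph: "(x, f x + g x) \<in> graph_on X (\<lambda>x. f x + g x)"
    using \<open>x \<in> X\<close> unfolding graph_on_def by auto
  from mesh_box_lift[OF box] assms \<open>x \<in> X\<close>
  consider "(x, f x + g x) \<in> mesh_box \<delta> i j" | "(x, f x + g x) \<in> mesh_box \<delta> i (j + 1)"
    by blast
  then show "p \<in> ?T \<union> ?down ` ?T"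
  proof cases
    case 1
    then have "(i, j) \<in> ?T" using graph unfolding mesh_cells_def by auto
    then show ?thesis using p by blast
  next
    case 2
    then have "(i, j + 1) \<in> ?T" using graph unfolding mesh_cells_def by auto
    moreover have "p = ?down (i, j + 1)" using p by simp
    ultimately show ?thesis by blast
  qed
qed

theorem lemma2:
  fixes X :: "real set" and \<delta> :: real and f g :: "real \<Rightarrow> real"
  assumes "\<delta> > 0"
    and "uniformly_continuous_on X f" and "uniformly_continuous_on X g"
    and "\<forall>x\<in>X. g x > 0"
    and "\<forall>x\<in>X. \<bar>g x\<bar> \<le> \<delta>"
  shows "N_delta \<delta> (graph_on X f) \<le> 2 * N_delta \<delta> (graph_on X (\<lambda>x. f x + g x))"
proof -
  have "\<forall>x\<in>X. 0 \<le> g x \<and> g x \<le> \<delta>" using assms(4,5) by force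
  then show ?thesis
    unfolding N_delta_eq_ecard
    by (rule ecard_le_double_if_subset_Un_image[OF mesh_cells_graph_lift])
qed

end
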